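(* Let $K$ be a field and $L$ a $K$-space carrying an algebra $(L,\nabla,\eta)$ and a coalgebra $(L,\Delta,\epsilon)$ such that $\epsilon\circ\eta=\mathrm{id}_K$ and $\Delta\circ\eta=\eta\otimes\eta$. Let $1_L=\eta(1_K)$, $H=\mathrm{Hom}_K(L,L)$, $\underline H=\mathrm{Hom}_K(L\otimes L,L\otimes L)$, $H_1=\{f\in H\mid f(1_L)=1_L\}$, $\underline H_1=\{F\in\underline H\mid F(1_L\otimes1_L)=1_L\otimes1_L\}$, and let $s:\underline H\to H\otimes H$ be the split map $s(F)=F_1\otimes F_2$ with $F_1(x)=(\mathrm{id}_L\otimes\epsilon)(F(x\otimes1_L))$, $F_2(x)=(\epsilon\otimes\mathrm{id}_L)(F(1_L\otimes x))$. Then for every $f\in H_1$, $\Delta\circ f\circ\nabla\in\underline H_1$ and $s(\Delta\circ f\circ\nabla)=f\otimes f$. Moreover, for any linearly independent set $\mathcal B\subseteq H_1$ with span $H_{\mathcal B}$, defining $\Delta_{\mathcal B}(\sum_b x_b b)=\sum_b x_b\,b\otimes b$ and $\epsilon_{\mathcal B}(f)=\epsilon(f(1_L))$, $(H_{\mathcal B},\Delta_{\mathcal B},\epsilon_{\mathcal B})$ is a coalgebra.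
   Context: The identifications $L\otimes K\cong L\cong K\otimes L$ are used in the definitions of $F_1,F_2$. *)

theory Defs
  imports Complex_Main "HOL-Library.Function_Algebras"
begin

text \<open>An element of A (x) B is represented by the bilinear form it induces on pairs of
linear functionals: x (x) y corresponds to (alpha, beta) maps to alpha x * beta y.
Over a field this representation is injective, so A (x) B is identified with the
span of the elementary tensors inside this function space.\<close>

type_synonym ('a, 'b, 'k) tens = "('a \<Rightarrow> 'k) \<Rightarrow> ('b \<Rightarrow> 'k) \<Rightarrow> 'k"

definition dual :: "('k::field \<Rightarrow> 'a::ab_group_add \<Rightarrow> 'a) \<Rightarrow> ('a \<Rightarrow> 'k) set" where
  "dual sA = {\<alpha>. Vector_Spaces.linear sA ((*) :: 'k \<Rightarrow> 'k \<Rightarrow> 'k) \<alpha>}"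

definition tensor ::
  "('k::field \<Rightarrow> 'a::ab_group_add \<Rightarrow> 'a) \<Rightarrow> ('k \<Rightarrow> 'b::ab_group_add \<Rightarrow> 'b) \<Rightarrow> 'a \<Rightarrow> 'b \<Rightarrow> ('a, 'b, 'k) tens" where
  "tensor sA sB x y = (\<lambda>\<alpha> \<beta>. if \<alpha> \<in> dual sA \<and> \<beta> \<in> dual sB then \<alpha> x * \<beta> y else 0)"

definition tscale :: "'k::field \<Rightarrow> ('a, 'b, 'k) tens \<Rightarrow> ('a, 'b, 'k) tens" where
  "tscale c t = (\<lambda>\<alpha> \<beta>. c * t \<alpha> \<beta>)"

definition tensors ::
  "('k::field \<Rightarrow> 'a::ab_group_add \<Rightarrow> 'a) \<Rightarrow> ('k \<Rightarrow> 'b::ab_group_add \<Rightarrow> 'b) \<Rightarrow> 'a set \<Rightarrow> 'b set \<Rightarrow> ('a, 'b, 'k) tens set" where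
  "tensors sA sB A B = {t. \<exists>(n::nat) x y. (\<forall>i<n. x i \<in> A \<and> y i \<in> B) \<and>
       t = (\<Sum>i<n. tensor sA sB (x i) (y i))}"

text \<open>the linear map A (x) B -> C induced by a bilinear map g (universal property)\<close>
definition tlift ::
  "('k::field \<Rightarrow> 'a::ab_group_add \<Rightarrow> 'a) \<Rightarrow> ('k \<Rightarrow> 'b::ab_group_add \<Rightarrow> 'b) \<Rightarrow> 'a set \<Rightarrow> 'b set
     \<Rightarrow> ('a \<Rightarrow> 'b \<Rightarrow> 'c::comm_monoid_add) \<Rightarrow> ('a, 'b, 'k) tens \<Rightarrow> 'c" where
  "tlift sA sB A B g t = (THE z. \<exists>(n::nat) x y. (\<forall>i<n. x i \<in> A \<and> y i \<in> B) \<and>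
       t = (\<Sum>i<n. tensor sA sB (x i) (y i)) \<and> z = (\<Sum>i<n. g (x i) (y i)))"

definition map_tensor ::
  "('k::field \<Rightarrow> 'a::ab_group_add \<Rightarrow> 'a) \<Rightarrow> ('k \<Rightarrow> 'b::ab_group_add \<Rightarrow> 'b)
   \<Rightarrow> ('k \<Rightarrow> 'c::ab_group_add \<Rightarrow> 'c) \<Rightarrow> ('k \<Rightarrow> 'd::ab_group_add \<Rightarrow> 'd)
   \<Rightarrow> 'a set \<Rightarrow> 'b set \<Rightarrow> ('a \<Rightarrow> 'c) \<Rightarrow> ('b \<Rightarrow> 'd) \<Rightarrow> ('a, 'b, 'k) tens \<Rightarrow> ('c, 'd, 'k) tens" where
  "map_tensor sA sB sC sD A B f g = tlift sA sB A B (\<lambda>a b. tensor sC sD (f a) (g b))"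

definition tassoc ::
  "('k::field \<Rightarrow> 'a::ab_group_add \<Rightarrow> 'a) \<Rightarrow> ('k \<Rightarrow> 'b::ab_group_add \<Rightarrow> 'b) \<Rightarrow> ('k \<Rightarrow> 'c::ab_group_add \<Rightarrow> 'c)
   \<Rightarrow> 'a set \<Rightarrow> 'b set \<Rightarrow> 'c set
   \<Rightarrow> (('a, 'b, 'k) tens, 'c, 'k) tens \<Rightarrow> ('a, ('b, 'c, 'k) tens, 'k) tens" where
  "tassoc sA sB sC A B C = tlift tscale sC (tensors sA sB A B) C
     (\<lambda>t c. tlift sA sB A B (\<lambda>a b. tensor sA tscale a (tensor sB sC b c)) t)"

definition lin_on :: "('k::field \<Rightarrow> 'a::ab_group_add \<Rightarrow> 'a) \<Rightarrow> ('k \<Rightarrow> 'b::ab_group_add \<Rightarrow> 'b) \<Rightarrow> 'a set \<Rightarrow> ('a \<Rightarrow> 'b) \<Rightarrow> bool" where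
  "lin_on sA sB A f \<longleftrightarrow> (\<forall>x\<in>A. \<forall>y\<in>A. f (x + y) = f x + f y) \<and> (\<forall>c. \<forall>x\<in>A. f (sA c x) = sB c (f x))"

definition hom_on :: "('k::field \<Rightarrow> 'a::ab_group_add \<Rightarrow> 'a) \<Rightarrow> ('k \<Rightarrow> 'b::ab_group_add \<Rightarrow> 'b) \<Rightarrow> 'a set \<Rightarrow> 'b set \<Rightarrow> ('a \<Rightarrow> 'b) \<Rightarrow> bool" where
  "hom_on sA sB A B f \<longleftrightarrow> lin_on sA sB A f \<and> (\<forall>x\<in>A. f x \<in> B)"

definition algebra :: "('k::field \<Rightarrow> 'a::ab_group_add \<Rightarrow> 'a) \<Rightarrow> 'a set \<Rightarrow> (('a, 'a, 'k) tens \<Rightarrow> 'a) \<Rightarrow> ('k \<Rightarrow> 'a) \<Rightarrow> bool" where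
  "algebra sV V mu eta \<longleftrightarrow>
     vector_space sV \<and> module.subspace sV V \<and>
     hom_on tscale sV (tensors sV sV V V) V mu \<and>
     hom_on ((*) :: 'k \<Rightarrow> 'k \<Rightarrow> 'k) sV UNIV V eta \<and>
     (\<forall>w \<in> tensors tscale sV (tensors sV sV V V) V.
        mu (map_tensor tscale sV sV sV (tensors sV sV V V) V mu id w)
      = mu (map_tensor sV tscale sV sV V (tensors sV sV V V) id mu (tassoc sV sV sV V V V w))) \<and>
     (\<forall>w \<in> tensors (*) sV UNIV V.
        mu (map_tensor (*) sV sV sV UNIV V eta id w) = tlift (*) sV UNIV V (\<lambda>c v. sV c v) w) \<and>
     (\<forall>w \<in> tensors sV (*) V UNIV.
        mu (map_tensor sV (*) sV sV V UNIV id eta w) = tlift sV (*) V UNIV (\<lambda>v c. sV c v) w)"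

definition coalgebra :: "('k::field \<Rightarrow> 'a::ab_group_add \<Rightarrow> 'a) \<Rightarrow> 'a set \<Rightarrow> ('a \<Rightarrow> ('a, 'a, 'k) tens) \<Rightarrow> ('a \<Rightarrow> 'k) \<Rightarrow> bool" where
  "coalgebra sV V Delta eps \<longleftrightarrow>
     vector_space sV \<and> module.subspace sV V \<and>
     hom_on sV tscale V (tensors sV sV V V) Delta \<and>
     lin_on sV ((*) :: 'k \<Rightarrow> 'k \<Rightarrow> 'k) V eps \<and>
     (\<forall>v\<in>V. tassoc sV sV sV V V V (map_tensor sV sV tscale sV V V Delta id (Delta v))
            = map_tensor sV sV sV tscale V V id Delta (Delta v)) \<and>
     (\<forall>v\<in>V. tlift sV sV V V (\<lambda>a b. sV (eps a) b) (Delta v) = v) \<and>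
     (\<forall>v\<in>V. tlift sV sV V V (\<lambda>a b. sV (eps b) a) (Delta v) = v)"

definition hscale :: "('k::field \<Rightarrow> 'l::ab_group_add \<Rightarrow> 'l) \<Rightarrow> 'k \<Rightarrow> ('l \<Rightarrow> 'l) \<Rightarrow> ('l \<Rightarrow> 'l)" where
  "hscale sL c f = (\<lambda>x. sL c (f x))"

definition Hom :: "('k::field \<Rightarrow> 'l::ab_group_add \<Rightarrow> 'l) \<Rightarrow> ('l \<Rightarrow> 'l) set" where
  "Hom sL = {f. Vector_Spaces.linear sL sL f}"

definition Hom1 :: "('k::field \<Rightarrow> 'l::ab_group_add \<Rightarrow> 'l) \<Rightarrow> 'l \<Rightarrow> ('l \<Rightarrow> 'l) set" where
  "Hom1 sL one = {f \<in> Hom sL. f one = one}"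

definition HomT :: "('k::field \<Rightarrow> 'l::ab_group_add \<Rightarrow> 'l) \<Rightarrow> (('l, 'l, 'k) tens \<Rightarrow> ('l, 'l, 'k) tens) set" where
  "HomT sL = {F. hom_on tscale tscale (tensors sL sL UNIV UNIV) (tensors sL sL UNIV UNIV) F}"

definition HomT1 :: "('k::field \<Rightarrow> 'l::ab_group_add \<Rightarrow> 'l) \<Rightarrow> 'l \<Rightarrow> (('l, 'l, 'k) tens \<Rightarrow> ('l, 'l, 'k) tens) set" where
  "HomT1 sL one = {F \<in> HomT sL. F (tensor sL sL one one) = tensor sL sL one one}"

text \<open>the split map s(F) = F_1 (x) F_2, using L (x) K = L = K (x) L\<close>
definition split1 :: "('k::field \<Rightarrow> 'l::ab_group_add \<Rightarrow> 'l) \<Rightarrow> 'l \<Rightarrow> ('l \<Rightarrow> 'k)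
    \<Rightarrow> (('l, 'l, 'k) tens \<Rightarrow> ('l, 'l, 'k) tens) \<Rightarrow> 'l \<Rightarrow> 'l" where
  "split1 sL one eps F = (\<lambda>x. tlift sL sL UNIV UNIV (\<lambda>a b. sL (eps b) a) (F (tensor sL sL x one)))"

definition split2 :: "('k::field \<Rightarrow> 'l::ab_group_add \<Rightarrow> 'l) \<Rightarrow> 'l \<Rightarrow> ('l \<Rightarrow> 'k)
    \<Rightarrow> (('l, 'l, 'k) tens \<Rightarrow> ('l, 'l, 'k) tens) \<Rightarrow> 'l \<Rightarrow> 'l" where
  "split2 sL one eps F = (\<lambda>x. tlift sL sL UNIV UNIV (\<lambda>a b. sL (eps a) b) (F (tensor sL sL one x)))"

definition split_map :: "('k::field \<Rightarrow> 'l::ab_group_add \<Rightarrow> 'l) \<Rightarrow> 'l \<Rightarrow> ('l \<Rightarrow> 'k)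
    \<Rightarrow> (('l, 'l, 'k) tens \<Rightarrow> ('l, 'l, 'k) tens) \<Rightarrow> ('l \<Rightarrow> 'l, 'l \<Rightarrow> 'l, 'k) tens" where
  "split_map sL one eps F = tensor (hscale sL) (hscale sL) (split1 sL one eps F) (split2 sL one eps F)"

definition DeltaB :: "('k::field \<Rightarrow> 'l::ab_group_add \<Rightarrow> 'l) \<Rightarrow> ('l \<Rightarrow> 'l) set
    \<Rightarrow> ('l \<Rightarrow> 'l) \<Rightarrow> ('l \<Rightarrow> 'l, 'l \<Rightarrow> 'l, 'k) tens" where
  "DeltaB sL B h = (\<Sum>b \<in> {b \<in> B. module.representation (hscale sL) B h b \<noteq> 0}.
      tscale (module.representation (hscale sL) B h b) (tensor (hscale sL) (hscale sL) b b))"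

end

theory Submission
  imports Defs
begin

text \<open>For \<open>f \<in> H\<^sub>1\<close> the two units give \<open>F(x \<otimes> 1) = \<Delta>(f x) = F(1 \<otimes> x)\<close> for
\<open>F = \<Delta> \<circ> f \<circ> \<nabla>\<close>, so both halves of the split map collapse to \<open>f\<close> by the counit laws,
while \<open>F(1 \<otimes> 1) = \<Delta>(1) = 1 \<otimes> 1\<close>. The coalgebra on the span of \<open>\<B>\<close> is the group-like
coalgebra of a basis: \<open>\<Delta> b = b \<otimes> b\<close> and \<open>\<epsilon> b = 1\<close>, for which coassociativity and the
counit laws can be checked on each basis vector.

Everything rests on the universal property of the tensor model: a balanced map lifts to
\<open>A \<otimes> B\<close> because two finite sums of elementary tensors that agree on all pairs of linear
functionals have the same image; expanding the right factors in a basis reduces this to the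
fact that linear functionals separate points.\<close>

lemma linear_add_eq: "Vector_Spaces.linear s1 s2 f \<Longrightarrow> f (x + y) = f x + f y"
  by (simp add: Vector_Spaces.linear_iff)

lemma linear_scale_eq: "Vector_Spaces.linear s1 s2 f \<Longrightarrow> f (s1 c x) = s2 c (f x)"
  by (simp add: Vector_Spaces.linear_iff)

lemma linear_sum_eq:
  "Vector_Spaces.linear s1 s2 (f :: 'a::ab_group_add \<Rightarrow> 'b::ab_group_add) \<Longrightarrow>
    f (\<Sum>i\<in>I. x i) = (\<Sum>i\<in>I. f (x i))"
  by (simp add: Vector_Spaces.linear_iff_module_hom module_hom.sum)

lemma lin_on_id: "lin_on s s A id"
  by (simp add: lin_on_def)

lemma vector_space_mult: "vector_space ((*) :: 'k::field \<Rightarrow> 'k \<Rightarrow> 'k)"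
  by (simp add: vector_space_def algebra_simps)

lemma vector_space_tscale: "vector_space (tscale :: 'k::field \<Rightarrow> ('a, 'b, 'k) tens \<Rightarrow> _)"
  by (simp add: vector_space_def tscale_def algebra_simps plus_fun_def)

lemma vector_space_hscale: "vector_space sL \<Longrightarrow> vector_space (hscale sL)"
  by (simp add: vector_space_def hscale_def plus_fun_def)

lemma (in vector_space) eq_if_functionals_agree:
  assumes "\<And>\<alpha>. Vector_Spaces.linear scale (*) \<alpha> \<Longrightarrow> \<alpha> x = \<alpha> y"
  shows "x = y"
proof (rule ccontr)
  assume "x \<noteq> y"
  define X where "X = extend_basis {}"
  have X: "independent X" "span X = UNIV"
    unfolding X_def using independent_empty independent_extend_basis span_extend_basis by auto
  have "(\<Sum>b | representation X (x - y) b \<noteq> 0. scale (representation X (x - y) b) b) \<noteq> 0"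
    using sum_nonzero_representation_eq[OF X(1)] X(2) \<open>x \<noteq> y\<close> by simp
  then have "{b. representation X (x - y) b \<noteq> 0} \<noteq> {}"
    by (metis sum.empty)
  then obtain b where b: "representation X (x - y) b \<noteq> 0"
    by blast
  have lin: "Vector_Spaces.linear scale (*) (\<lambda>v. representation X v b)"
    by (rule linear_representation[OF X])
  have "representation X (x - y) b = representation X x b - representation X y b"
    using linear_add_eq[OF lin, of "x - y" y] by simp
  with assms[OF lin] b show False by simp
qed

definition balanced :: "('k::field \<Rightarrow> 'a::ab_group_add \<Rightarrow> 'a) \<Rightarrow> ('k \<Rightarrow> 'b::ab_group_add \<Rightarrow> 'b)
    \<Rightarrow> 'a set \<Rightarrow> 'b set \<Rightarrow> ('a \<Rightarrow> 'b \<Rightarrow> 'c::ab_group_add) \<Rightarrow> bool" where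
  "balanced sA sB A B g \<longleftrightarrow>
    (\<forall>x\<in>A. \<forall>x'\<in>A. \<forall>y\<in>B. g (x + x') y = g x y + g x' y) \<and>
    (\<forall>x\<in>A. \<forall>y\<in>B. \<forall>y'\<in>B. g x (y + y') = g x y + g x y') \<and>
    (\<forall>c. \<forall>x\<in>A. \<forall>y\<in>B. g (sA c x) y = g x (sB c y))"

lemma balanced_sum_right:
  assumes bal: "balanced sA sB A B g" and "vector_space sB" "module.subspace sB B"
    and x: "x \<in> A" and "finite E" "\<And>e. e \<in> E \<Longrightarrow> y e \<in> B"
  shows "g x (\<Sum>e\<in>E. y e) = (\<Sum>e\<in>E. g x (y e))"
proof -
  interpret vector_space sB by fact
  show ?thesis using \<open>finite E\<close> \<open>\<And>e. e \<in> E \<Longrightarrow> y e \<in> B\<close>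
  proof (induction E rule: finite_induct)
    case empty
    have "0 \<in> B" using subspace_0 \<open>subspace B\<close> .
    then have "g x (0 + 0) = g x 0 + g x 0" using bal x unfolding balanced_def by blast
    then show ?case by simp
  next
    case (insert a F)
    have "(\<Sum>e\<in>F. y e) \<in> B" using insert subspace_sum \<open>subspace B\<close> by blast
    then show ?case using insert bal x unfolding balanced_def by simp
  qed
qed

lemma balanced_sum_left:
  assumes bal: "balanced sA sB A B g" and "vector_space sA" "module.subspace sA A"
    and y: "y \<in> B" and "finite E" "\<And>e. e \<in> E \<Longrightarrow> x e \<in> A"
  shows "g (\<Sum>e\<in>E. x e) y = (\<Sum>e\<in>E. g (x e) y)"
proof -
  interpret vector_space sA by fact
  show ?thesis using \<open>finite E\<close> \<open>\<And>e. e \<in> E \<Longrightarrow> x e \<in> A\<close>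
  proof (induction E rule: finite_induct)
    case empty
    have "0 \<in> A" using subspace_0 \<open>subspace A\<close> .
    then have "g (0 + 0) y = g 0 y + g 0 y" using bal y unfolding balanced_def by blast
    then show ?case by simp
  next
    case (insert a F)
    have "(\<Sum>e\<in>F. x e) \<in> A" using insert subspace_sum \<open>subspace A\<close> by blast
    then show ?case using insert bal y unfolding balanced_def by simp
  qed
qed

lemma tensor_add_left: "tensor sA sB (x + x') y = tensor sA sB x y + tensor sA sB x' y"
  by (rule ext)+ (auto simp: tensor_def dual_def linear_add_eq algebra_simps)

lemma tensor_add_right: "tensor sA sB x (y + y') = tensor sA sB x y + tensor sA sB x y'"
  by (rule ext)+ (auto simp: tensor_def dual_def linear_add_eq algebra_simps)

lemma tensor_scale_left: "tensor sA sB (sA c x) y = tscale c (tensor sA sB x y)"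
  by (rule ext)+ (simp add: tensor_def tscale_def dual_def linear_scale_eq algebra_simps)

lemma tensor_scale_right: "tensor sA sB x (sB c y) = tscale c (tensor sA sB x y)"
  by (rule ext)+ (simp add: tensor_def tscale_def dual_def linear_scale_eq algebra_simps)

lemma tensor_zero_left: "tensor sA sB 0 y = 0"
  using tensor_add_left[of sA sB 0 0 y] by simp

lemma tscale_sum: "tscale c (\<Sum>i\<in>I. t i) = (\<Sum>i\<in>I. tscale c (t i))"
  by (induction I rule: infinite_finite_induct) (auto simp: tscale_def plus_fun_def fun_eq_iff algebra_simps)

lemma sum_tensor_apply:
  "\<alpha> \<in> dual sA \<Longrightarrow> \<beta> \<in> dual sB \<Longrightarrow>
    (\<Sum>i\<in>I. tensor sA sB (x i) (y i)) \<alpha> \<beta> = (\<Sum>i\<in>I. \<alpha> (x i) * \<beta> (y i))"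
  by (induction I rule: infinite_finite_induct) (auto simp: tensor_def)

lemma balanced_tensor_map:
  assumes "lin_on sA sC A f" "lin_on sB sD B g"
  shows "balanced sA sB A B (\<lambda>a b. tensor sC sD (f a) (g b))"
  using assms by (simp add: balanced_def lin_on_def tensor_add_left tensor_add_right
      tensor_scale_left tensor_scale_right)

lemma balanced_scale_left:
  assumes "lin_on sA (*) A e" "vector_space sB"
  shows "balanced sA sB A B (\<lambda>a b. sB (e a) b)"
proof -
  interpret vector_space sB by fact
  show ?thesis using assms(1) by (simp add: balanced_def lin_on_def scale_left_distrib scale_right_distrib)
qed

lemma balanced_scale_right:
  assumes "lin_on sB (*) B e" "vector_space sA"
  shows "balanced sA sB A B (\<lambda>a b. sA (e b) a)"
proof -
  interpret vector_space sA by fact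
  show ?thesis using assms(1)
    by (simp add: balanced_def lin_on_def scale_left_distrib scale_right_distrib mult.commute)
qed

subsection \<open>Well-definedness of the lift\<close>

lemma balanced_sum_expand:
  fixes sA :: "'k::field \<Rightarrow> 'a::ab_group_add \<Rightarrow> 'a" and sB :: "'k \<Rightarrow> 'b::ab_group_add \<Rightarrow> 'b"
  assumes vA: "vector_space sA" and vB: "vector_space sB"
    and A: "module.subspace sA A" and B: "module.subspace sB B"
    and bal: "balanced sA sB A B g"
    and X: "\<not> module.dependent sB X" "module.span sB X = UNIV"
    and E: "finite E" "E \<subseteq> B"
    and K: "finite K" "\<And>k. k \<in> K \<Longrightarrow> u k \<in> A \<and> w k \<in> B"
    and supp: "\<And>k b. k \<in> K \<Longrightarrow> module.representation sB X (w k) b \<noteq> 0 \<Longrightarrow> b \<in> E"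
  shows "(\<Sum>k\<in>K. g (u k) (w k)) =
     (\<Sum>e\<in>E. g (\<Sum>k\<in>K. sA (module.representation sB X (w k) e) (u k)) e)"
proof -
  interpret vsA: vector_space sA by fact
  interpret vsB: vector_space sB by fact
  let ?r = "vsB.representation X"
  have w: "w k = (\<Sum>e\<in>E. sB (?r (w k) e) e)" if "k \<in> K" for k
  proof -
    have "(\<Sum>e\<in>E. sB (?r (w k) e) e) = (\<Sum>e | ?r (w k) e \<noteq> 0. sB (?r (w k) e) e)"
      using supp[OF that] E(1) by (intro sum.mono_neutral_cong_right) auto
    also have "\<dots> = w k" using vsB.sum_nonzero_representation_eq[OF X(1)] X(2) by auto
    finally show ?thesis by simp
  qed
  have "(\<Sum>k\<in>K. g (u k) (w k)) = (\<Sum>k\<in>K. \<Sum>e\<in>E. g (sA (?r (w k) e) (u k)) e)"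
  proof (rule sum.cong[OF refl])
    fix k assume k: "k \<in> K"
    have "g (u k) (w k) = (\<Sum>e\<in>E. g (u k) (sB (?r (w k) e) e))"
      using E K(2)[OF k] B by (subst w[OF k], intro balanced_sum_right[OF bal vB B])
        (auto intro: vsB.subspace_scale)
    also have "\<dots> = (\<Sum>e\<in>E. g (sA (?r (w k) e) (u k)) e)"
      using E K(2)[OF k] bal unfolding balanced_def by (intro sum.cong) auto
    finally show "g (u k) (w k) = (\<Sum>e\<in>E. g (sA (?r (w k) e) (u k)) e)" .
  qed
  also have "\<dots> = (\<Sum>e\<in>E. \<Sum>k\<in>K. g (sA (?r (w k) e) (u k)) e)"
    by (rule sum.swap)
  also have "\<dots> = (\<Sum>e\<in>E. g (\<Sum>k\<in>K. sA (?r (w k) e) (u k)) e)"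
    using E K A by (intro sum.cong[OF refl] balanced_sum_left[OF bal vA A, symmetric])
      (auto intro: vsA.subspace_scale)
  finally show ?thesis .
qed

lemma balanced_sum_eq_if_tensor_sums_eq:
  fixes sA :: "'k::field \<Rightarrow> 'a::ab_group_add \<Rightarrow> 'a" and sB :: "'k \<Rightarrow> 'b::ab_group_add \<Rightarrow> 'b"
  assumes vA: "vector_space sA" and vB: "vector_space sB"
    and A: "module.subspace sA A" and B: "module.subspace sB B"
    and bal: "balanced sA sB A B g"
    and I: "finite I" "\<And>i. i \<in> I \<Longrightarrow> x i \<in> A \<and> y i \<in> B"
    and J: "finite J" "\<And>j. j \<in> J \<Longrightarrow> x' j \<in> A \<and> y' j \<in> B"
    and eq: "(\<Sum>i\<in>I. tensor sA sB (x i) (y i)) = (\<Sum>j\<in>J. tensor sA sB (x' j) (y' j))"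
  shows "(\<Sum>i\<in>I. g (x i) (y i)) = (\<Sum>j\<in>J. g (x' j) (y' j))"
proof -
  interpret vsA: vector_space sA by fact
  interpret vsB: vector_space sB by fact
  obtain Y where Y: "Y \<subseteq> B" "vsB.independent Y" "B \<subseteq> vsB.span Y"
    using vsB.maximal_independent_subset by blast
  define X where "X = vsB.extend_basis Y"
  have X: "vsB.independent X" "vsB.span X = UNIV" "Y \<subseteq> X"
    unfolding X_def using vsB.independent_extend_basis vsB.extend_basis_superset Y(2) by auto
  let ?r = "vsB.representation X"
  \<comment> \<open>the basis \<open>X\<close> extends one of \<open>B\<close>, so vectors of \<open>B\<close> have coordinates only in \<open>B\<close>\<close>
  have suppY: "b \<in> Y" if "v \<in> B" "?r v b \<noteq> 0" for v b
    using vsB.representation_extend[OF X(1), of v Y] Y(3) that X(3) vsB.representation_ne_zero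
    by (metis subsetD)
  define E where "E = (\<Union>i\<in>I. {b. ?r (y i) b \<noteq> 0}) \<union> (\<Union>j\<in>J. {b. ?r (y' j) b \<noteq> 0})"
  have Ef: "finite E" unfolding E_def using I(1) J(1) by (auto intro: vsB.finite_representation)
  have EB: "E \<subseteq> B" unfolding E_def using I J suppY Y(1) by blast
  have coeff_eq: "(\<Sum>i\<in>I. sA (?r (y i) e) (x i)) = (\<Sum>j\<in>J. sA (?r (y' j) e) (x' j))" for e
  proof (rule vsA.eq_if_functionals_agree)
    fix \<alpha> :: "'a \<Rightarrow> 'k" assume \<alpha>: "Vector_Spaces.linear sA (*) \<alpha>"
    have \<beta>: "Vector_Spaces.linear sB (*) (\<lambda>v. ?r v e)"
      by (rule vsB.linear_representation[OF X(1,2)])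
    have duals: "\<alpha> \<in> dual sA" "(\<lambda>v. ?r v e) \<in> dual sB"
      using \<alpha> \<beta> by (auto simp: dual_def)
    have "\<alpha> (\<Sum>i\<in>I. sA (?r (y i) e) (x i)) = (\<Sum>i\<in>I. \<alpha> (x i) * ?r (y i) e)"
      by (simp add: linear_sum_eq[OF \<alpha>] linear_scale_eq[OF \<alpha>] mult.commute)
    also have "\<dots> = (\<Sum>j\<in>J. \<alpha> (x' j) * ?r (y' j) e)"
      using eq sum_tensor_apply[OF duals] by metis
    also have "\<dots> = \<alpha> (\<Sum>j\<in>J. sA (?r (y' j) e) (x' j))"
      by (simp add: linear_sum_eq[OF \<alpha>] linear_scale_eq[OF \<alpha>] mult.commute)
    finally show "\<alpha> (\<Sum>i\<in>I. sA (?r (y i) e) (x i)) = \<alpha> (\<Sum>j\<in>J. sA (?r (y' j) e) (x' j))" .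
  qed
  have "(\<Sum>i\<in>I. g (x i) (y i)) = (\<Sum>e\<in>E. g (\<Sum>i\<in>I. sA (?r (y i) e) (x i)) e)"
    by (rule balanced_sum_expand[OF vA vB A B bal X(1,2) Ef EB I]) (auto simp: E_def)
  also have "\<dots> = (\<Sum>e\<in>E. g (\<Sum>j\<in>J. sA (?r (y' j) e) (x' j)) e)"
    by (simp only: coeff_eq)
  also have "\<dots> = (\<Sum>j\<in>J. g (x' j) (y' j))"
    by (rule balanced_sum_expand[OF vA vB A B bal X(1,2) Ef EB J, symmetric]) (auto simp: E_def)
  finally show ?thesis .
qed

lemma tensors_sum:
  assumes "finite I" "\<And>i. i \<in> I \<Longrightarrow> x i \<in> A \<and> y i \<in> B"
  shows "(\<Sum>i\<in>I. tensor sA sB (x i) (y i)) \<in> tensors sA sB A B"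
proof -
  obtain n :: nat and h where h: "bij_betw h {..<n} I"
    using ex_bij_betw_nat_finite[OF assms(1)] by (auto simp: atLeast0LessThan)
  have "(\<Sum>i\<in>I. tensor sA sB (x i) (y i)) = (\<Sum>i<n. tensor sA sB (x (h i)) (y (h i)))"
    using sum.reindex_bij_betw[OF h, of "\<lambda>i. tensor sA sB (x i) (y i)"] by simp
  moreover have "\<forall>i<n. x (h i) \<in> A \<and> y (h i) \<in> B"
    using h assms(2) by (auto simp: bij_betw_apply)
  ultimately show ?thesis unfolding tensors_def
    by (intro CollectI exI[where x=n] exI[where x="\<lambda>i. x (h i)"] exI[where x="\<lambda>i. y (h i)"]) simp
qed

lemma tensor_in_tensors: "x \<in> A \<Longrightarrow> y \<in> B \<Longrightarrow> tensor sA sB x y \<in> tensors sA sB A B"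
  using tensors_sum[of "{()}" "\<lambda>_. x" A "\<lambda>_. y" B sA sB] by simp

lemma tensorsE:
  assumes "t \<in> tensors sA sB A B"
  obtains I :: "nat set" and x y where "finite I" "\<And>i. i \<in> I \<Longrightarrow> x i \<in> A \<and> y i \<in> B"
    "t = (\<Sum>i\<in>I. tensor sA sB (x i) (y i))"
  using assms unfolding tensors_def by (auto simp: lessThan_def)

lemma tlift_sum:
  fixes sA :: "'k::field \<Rightarrow> 'a::ab_group_add \<Rightarrow> 'a" and sB :: "'k \<Rightarrow> 'b::ab_group_add \<Rightarrow> 'b"
  assumes vA: "vector_space sA" and vB: "vector_space sB"
    and A: "module.subspace sA A" and B: "module.subspace sB B"
    and bal: "balanced sA sB A B g"
    and I: "finite I" "\<And>i. i \<in> I \<Longrightarrow> x i \<in> A \<and> y i \<in> B"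
  shows "tlift sA sB A B g (\<Sum>i\<in>I. tensor sA sB (x i) (y i)) = (\<Sum>i\<in>I. g (x i) (y i))"
  unfolding tlift_def
proof (rule the_equality)
  obtain n :: nat and h where h: "bij_betw h {..<n} I"
    using ex_bij_betw_nat_finite[OF I(1)] by (auto simp: atLeast0LessThan)
  have "(\<Sum>i\<in>I. tensor sA sB (x i) (y i)) = (\<Sum>i<n. tensor sA sB (x (h i)) (y (h i)))"
    "(\<Sum>i\<in>I. g (x i) (y i)) = (\<Sum>i<n. g (x (h i)) (y (h i)))"
    using sum.reindex_bij_betw[OF h, of "\<lambda>i. tensor sA sB (x i) (y i)"]
      sum.reindex_bij_betw[OF h, of "\<lambda>i. g (x i) (y i)"] by simp_all
  moreover have "\<forall>i<n. x (h i) \<in> A \<and> y (h i) \<in> B"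
    using h I(2) by (auto simp: bij_betw_apply)
  ultimately show "\<exists>(n::nat) x' y'. (\<forall>i<n. x' i \<in> A \<and> y' i \<in> B) \<and>
      (\<Sum>i\<in>I. tensor sA sB (x i) (y i)) = (\<Sum>i<n. tensor sA sB (x' i) (y' i)) \<and>
      (\<Sum>i\<in>I. g (x i) (y i)) = (\<Sum>i<n. g (x' i) (y' i))"
    by (intro exI[where x=n] exI[where x="\<lambda>i. x (h i)"] exI[where x="\<lambda>i. y (h i)"]) simp
next
  fix z assume "\<exists>(m::nat) x' y'. (\<forall>i<m. x' i \<in> A \<and> y' i \<in> B) \<and>
      (\<Sum>i\<in>I. tensor sA sB (x i) (y i)) = (\<Sum>i<m. tensor sA sB (x' i) (y' i)) \<and>
      z = (\<Sum>i<m. g (x' i) (y' i))"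
  then obtain m :: nat and x' y' where "\<forall>i<m. x' i \<in> A \<and> y' i \<in> B"
      "(\<Sum>i\<in>I. tensor sA sB (x i) (y i)) = (\<Sum>i\<in>{..<m}. tensor sA sB (x' i) (y' i))"
      "z = (\<Sum>i\<in>{..<m}. g (x' i) (y' i))"
    by blast
  then show "z = (\<Sum>i\<in>I. g (x i) (y i))"
    using balanced_sum_eq_if_tensor_sums_eq[OF vA vB A B bal I, where J="{..<m}" and x'=x' and y'=y']
    by auto
qed

lemma tlift_tensor:
  assumes "vector_space sA" "vector_space sB" "module.subspace sA A" "module.subspace sB B"
    and "balanced sA sB A B g" "x \<in> A" "y \<in> B"
  shows "tlift sA sB A B g (tensor sA sB x y) = g x y"
  using tlift_sum[OF assms(1-5), of "{()}" "\<lambda>_. x" "\<lambda>_. y"] assms(6,7) by simp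

lemma tensors_add:
  assumes "t1 \<in> tensors sA sB A B" "t2 \<in> tensors sA sB A B"
  shows "t1 + t2 \<in> tensors sA sB A B"
proof -
  obtain I1 :: "nat set" and x1 y1 where 1: "finite I1" "\<And>i. i \<in> I1 \<Longrightarrow> x1 i \<in> A \<and> y1 i \<in> B"
    "t1 = (\<Sum>i\<in>I1. tensor sA sB (x1 i) (y1 i))" using tensorsE[OF assms(1)] by blast
  obtain I2 :: "nat set" and x2 y2 where 2: "finite I2" "\<And>i. i \<in> I2 \<Longrightarrow> x2 i \<in> A \<and> y2 i \<in> B"
    "t2 = (\<Sum>i\<in>I2. tensor sA sB (x2 i) (y2 i))" using tensorsE[OF assms(2)] by blast
  have "t1 + t2 = (\<Sum>p\<in>I1 <+> I2. tensor sA sB (case_sum x1 x2 p) (case_sum y1 y2 p))"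
    by (simp add: sum.Plus 1 2 comp_def)
  also have "\<dots> \<in> tensors sA sB A B"
    by (rule tensors_sum) (use 1 2 in auto)
  finally show ?thesis .
qed

lemma tlift_add:
  assumes vA: "vector_space sA" and vB: "vector_space sB"
    and A: "module.subspace sA A" and B: "module.subspace sB B"
    and bal: "balanced sA sB A B g"
    and "t1 \<in> tensors sA sB A B" "t2 \<in> tensors sA sB A B"
  shows "tlift sA sB A B g (t1 + t2) = tlift sA sB A B g t1 + tlift sA sB A B g t2"
proof -
  obtain I1 :: "nat set" and x1 y1 where 1: "finite I1" "\<And>i. i \<in> I1 \<Longrightarrow> x1 i \<in> A \<and> y1 i \<in> B"
    "t1 = (\<Sum>i\<in>I1. tensor sA sB (x1 i) (y1 i))" using tensorsE[OF assms(6)] by blast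
  obtain I2 :: "nat set" and x2 y2 where 2: "finite I2" "\<And>i. i \<in> I2 \<Longrightarrow> x2 i \<in> A \<and> y2 i \<in> B"
    "t2 = (\<Sum>i\<in>I2. tensor sA sB (x2 i) (y2 i))" using tensorsE[OF assms(7)] by blast
  have "t1 + t2 = (\<Sum>p\<in>I1 <+> I2. tensor sA sB (case_sum x1 x2 p) (case_sum y1 y2 p))"
    by (simp add: sum.Plus 1 2 comp_def)
  then have "tlift sA sB A B g (t1 + t2) = (\<Sum>p\<in>I1 <+> I2. g (case_sum x1 x2 p) (case_sum y1 y2 p))"
    by (simp only:) (rule tlift_sum[OF vA vB A B bal]; use 1 2 in auto)
  also have "\<dots> = (\<Sum>i\<in>I1. g (x1 i) (y1 i)) + (\<Sum>i\<in>I2. g (x2 i) (y2 i))"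
    by (simp add: sum.Plus 1(1) 2(1) comp_def)
  also have "\<dots> = tlift sA sB A B g t1 + tlift sA sB A B g t2"
    unfolding 1(3) 2(3) using tlift_sum[OF vA vB A B bal 1(1,2)] tlift_sum[OF vA vB A B bal 2(1,2)]
    by simp
  finally show ?thesis .
qed

lemma tensors_subspace:
  assumes "vector_space sA" "module.subspace sA A"
  shows "module.subspace tscale (tensors sA sB A B)"
proof -
  interpret vsA: vector_space sA by fact
  interpret vsT: vector_space tscale by (rule vector_space_tscale)
  have "tscale c t \<in> tensors sA sB A B" if t: "t \<in> tensors sA sB A B" for c t
  proof -
    obtain I :: "nat set" and x y where "finite I" "\<And>i. i \<in> I \<Longrightarrow> x i \<in> A \<and> y i \<in> B"
      "t = (\<Sum>i\<in>I. tensor sA sB (x i) (y i))" using tensorsE[OF t] by blast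
    then show ?thesis using vsA.subspace_scale[OF assms(2)]
      by (auto simp: tscale_sum tensor_scale_left[symmetric] intro!: tensors_sum)
  qed
  moreover have "0 \<in> tensors sA sB A B"
    using tensors_sum[of "{}"] by simp
  ultimately show ?thesis
    unfolding vsT.subspace_def using tensors_add by blast
qed

lemma map_tensor_sum:
  assumes "vector_space sA" "vector_space sB" "module.subspace sA A" "module.subspace sB B"
    and "lin_on sA sC A f" "lin_on sB sD B g"
    and "finite I" "\<And>i. i \<in> I \<Longrightarrow> x i \<in> A \<and> y i \<in> B"
  shows "map_tensor sA sB sC sD A B f g (\<Sum>i\<in>I. tensor sA sB (x i) (y i))
       = (\<Sum>i\<in>I. tensor sC sD (f (x i)) (g (y i)))"
  unfolding map_tensor_def using assms by (intro tlift_sum balanced_tensor_map)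

lemma map_tensor_tensor:
  assumes "vector_space sA" "vector_space sB" "module.subspace sA A" "module.subspace sB B"
    and "lin_on sA sC A f" "lin_on sB sD B g" "x \<in> A" "y \<in> B"
  shows "map_tensor sA sB sC sD A B f g (tensor sA sB x y) = tensor sC sD (f x) (g y)"
  unfolding map_tensor_def using assms by (intro tlift_tensor balanced_tensor_map)

text \<open>The lift of a family of balanced maps depending linearly on a third argument is balanced
in that argument; this is what makes the associator well defined.\<close>

lemma balanced_tlift:
  fixes sA :: "'k::field \<Rightarrow> 'a::ab_group_add \<Rightarrow> 'a" and sB :: "'k \<Rightarrow> 'b::ab_group_add \<Rightarrow> 'b"
    and sC :: "'k \<Rightarrow> 'c::ab_group_add \<Rightarrow> 'c" and k :: "'c \<Rightarrow> 'a \<Rightarrow> 'b \<Rightarrow> 'd::ab_group_add"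
  assumes vA: "vector_space sA" and vB: "vector_space sB"
    and A: "module.subspace sA A" and B: "module.subspace sB B"
    and bal: "\<And>c. balanced sA sB A B (k c)"
    and add: "\<And>c c' a b. k (c + c') a b = k c a b + k c' a b"
    and scale: "\<And>d c a b. k c (sA d a) b = k (sC d c) a b"
  shows "balanced tscale sC (tensors sA sB A B) C (\<lambda>t c. tlift sA sB A B (k c) t)"
proof -
  interpret vsA: vector_space sA by fact
  have "tlift sA sB A B (k (c + c')) t = tlift sA sB A B (k c) t + tlift sA sB A B (k c') t"
    and "tlift sA sB A B (k c) (tscale d t) = tlift sA sB A B (k (sC d c)) t"
    if t_in: "t \<in> tensors sA sB A B" for t c c' d
  proof -
    obtain I :: "nat set" and x y where I: "finite I" "\<And>i. i \<in> I \<Longrightarrow> x i \<in> A \<and> y i \<in> B"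
      and t: "t = (\<Sum>i\<in>I. tensor sA sB (x i) (y i))" using tensorsE[OF t_in] by blast
    have lift: "tlift sA sB A B (k c) t = (\<Sum>i\<in>I. k c (x i) (y i))" for c
      unfolding t using tlift_sum[OF vA vB A B bal I] .
    show "tlift sA sB A B (k (c + c')) t = tlift sA sB A B (k c) t + tlift sA sB A B (k c') t"
      by (simp add: lift add sum.distrib)
    have "tscale d t = (\<Sum>i\<in>I. tensor sA sB (sA d (x i)) (y i))"
      by (simp add: t tscale_sum tensor_scale_left)
    then have "tlift sA sB A B (k c) (tscale d t) = (\<Sum>i\<in>I. k c (sA d (x i)) (y i))"
      using tlift_sum[OF vA vB A B bal I(1), of "\<lambda>i. sA d (x i)"] I(2)
        vsA.subspace_scale[OF A] by auto
    then show "tlift sA sB A B (k c) (tscale d t) = tlift sA sB A B (k (sC d c)) t"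
      by (simp add: lift scale)
  qed
  then show ?thesis
    unfolding balanced_def using tlift_add[OF vA vB A B bal] by auto
qed

lemma balanced_tassoc_kernel:
  "balanced sA sB A B (\<lambda>a b. tensor sA tscale a (tensor sB sC b c))"
  by (rule balanced_tensor_map[where f=id and g="\<lambda>b. tensor sB sC b c", simplified])
    (simp_all add: lin_on_def tensor_add_left tensor_scale_left)

lemma tassoc_tensor_tensor:
  assumes "vector_space sA" "vector_space sB" "vector_space sC"
    and "module.subspace sA A" "module.subspace sB B" "module.subspace sC C"
    and "finite I" "\<And>i. i \<in> I \<Longrightarrow> a i \<in> A \<and> b i \<in> B \<and> c i \<in> C"
  shows "tassoc sA sB sC A B C (\<Sum>i\<in>I. tensor tscale sC (tensor sA sB (a i) (b i)) (c i))
       = (\<Sum>i\<in>I. tensor sA tscale (a i) (tensor sB sC (b i) (c i)))"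
proof -
  have "balanced tscale sC (tensors sA sB A B) C
      (\<lambda>t c. tlift sA sB A B (\<lambda>a b. tensor sA tscale a (tensor sB sC b c)) t)"
    using assms(1,2,4,5) balanced_tassoc_kernel
    by (rule balanced_tlift) (simp_all add: tensor_add_right tensor_scale_left tensor_scale_right)
  then have "tassoc sA sB sC A B C (\<Sum>i\<in>I. tensor tscale sC (tensor sA sB (a i) (b i)) (c i))
      = (\<Sum>i\<in>I. tlift sA sB A B (\<lambda>a b. tensor sA tscale a (tensor sB sC b (c i)))
                  (tensor sA sB (a i) (b i)))"
    unfolding tassoc_def using assms
    by (intro tlift_sum vector_space_tscale tensors_subspace) (auto intro: tensor_in_tensors)
  also have "\<dots> = (\<Sum>i\<in>I. tensor sA tscale (a i) (tensor sB sC (b i) (c i)))"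
    using assms by (intro sum.cong refl tlift_tensor balanced_tassoc_kernel) auto
  finally show ?thesis .
qed

subsection \<open>Units of an algebra and the split map\<close>

lemma algebra_unit_left:
  fixes sV :: "'k::field \<Rightarrow> 'a::ab_group_add \<Rightarrow> 'a"
  assumes alg: "algebra sV V mu eta" and x: "x \<in> V"
  shows "mu (tensor sV sV (eta 1) x) = x"
proof -
  have vV: "vector_space sV" and V: "module.subspace sV V"
    and eta: "lin_on (*) sV UNIV eta"
    and unit: "\<forall>w \<in> tensors (*) sV UNIV V.
      mu (map_tensor (*) sV sV sV UNIV V eta id w) = tlift (*) sV UNIV V (\<lambda>c v. sV c v) w"
    using alg by (auto simp: algebra_def hom_on_def)
  interpret vsK: vector_space "(*) :: 'k \<Rightarrow> 'k \<Rightarrow> 'k" by (rule vector_space_mult)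
  interpret vsV: vector_space sV by (rule vV)
  have "mu (tensor sV sV (eta 1) x) = mu (map_tensor (*) sV sV sV UNIV V eta id (tensor (*) sV 1 x))"
    using map_tensor_tensor[OF vector_space_mult vV vsK.subspace_UNIV V eta lin_on_id] x by simp
  also have "\<dots> = tlift (*) sV UNIV V (\<lambda>c v. sV (id c) v) (tensor (*) sV 1 x)"
    using unit x by (simp add: tensor_in_tensors)
  also have "\<dots> = x"
    using tlift_tensor[OF vector_space_mult vV vsK.subspace_UNIV V
        balanced_scale_left[OF lin_on_id vV]] x by simp
  finally show ?thesis .
qed

lemma algebra_unit_right:
  fixes sV :: "'k::field \<Rightarrow> 'a::ab_group_add \<Rightarrow> 'a"
  assumes alg: "algebra sV V mu eta" and x: "x \<in> V"
  shows "mu (tensor sV sV x (eta 1)) = x"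
proof -
  have vV: "vector_space sV" and V: "module.subspace sV V"
    and eta: "lin_on (*) sV UNIV eta"
    and unit: "\<forall>w \<in> tensors sV (*) V UNIV.
      mu (map_tensor sV (*) sV sV V UNIV id eta w) = tlift sV (*) V UNIV (\<lambda>v c. sV c v) w"
    using alg by (auto simp: algebra_def hom_on_def)
  interpret vsK: vector_space "(*) :: 'k \<Rightarrow> 'k \<Rightarrow> 'k" by (rule vector_space_mult)
  interpret vsV: vector_space sV by (rule vV)
  have "mu (tensor sV sV x (eta 1)) = mu (map_tensor sV (*) sV sV V UNIV id eta (tensor sV (*) x 1))"
    using map_tensor_tensor[OF vV vector_space_mult V vsK.subspace_UNIV lin_on_id eta] x by simp
  also have "\<dots> = tlift sV (*) V UNIV (\<lambda>v c. sV (id c) v) (tensor sV (*) x 1)"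
    using unit x by (simp add: tensor_in_tensors)
  also have "\<dots> = x"
    using tlift_tensor[OF vV vector_space_mult V vsK.subspace_UNIV
        balanced_scale_right[OF lin_on_id vV]] x by simp
  finally show ?thesis .
qed

lemma split_map_comult_comp_mult:
  assumes alg: "algebra sL UNIV mu eta" and coa: "coalgebra sL UNIV Delta eps"
  shows "split_map sL (eta 1) eps (\<lambda>t. Delta (f (mu t))) = tensor (hscale sL) (hscale sL) f f"
proof -
  have "split1 sL (eta 1) eps (\<lambda>t. Delta (f (mu t))) = f"
    and "split2 sL (eta 1) eps (\<lambda>t. Delta (f (mu t))) = f"
    using coa by (auto simp: split1_def split2_def coalgebra_def
        algebra_unit_left[OF alg] algebra_unit_right[OF alg])
  then show ?thesis by (simp add: split_map_def)
qed

lemma comult_comp_mult_in_HomT1: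
  assumes alg: "algebra sL UNIV mu eta" and coa: "coalgebra sL UNIV Delta eps"
    and f: "f \<in> Hom1 sL (eta 1)" and Delta_unit: "Delta (eta 1) = tensor sL sL (eta 1) (eta 1)"
  shows "(\<lambda>t. Delta (f (mu t))) \<in> HomT1 sL (eta 1)"
proof -
  have mu: "hom_on tscale sL (tensors sL sL UNIV UNIV) UNIV mu"
    and Delta: "hom_on sL tscale UNIV (tensors sL sL UNIV UNIV) Delta"
    using alg coa by (auto simp: algebra_def coalgebra_def)
  have "Vector_Spaces.linear sL sL f" and f1: "f (eta 1) = eta 1"
    using f by (auto simp: Hom1_def Hom_def)
  then have "(\<lambda>t. Delta (f (mu t))) \<in> HomT sL"
    using mu Delta by (auto simp: HomT_def hom_on_def lin_on_def linear_add_eq linear_scale_eq)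
  then show ?thesis
    using Delta_unit f1 algebra_unit_left[OF alg] by (simp add: HomT1_def)
qed

subsection \<open>The group-like coalgebra of a linearly independent set\<close>

definition grouplike_comult :: "('k::field \<Rightarrow> 'v::ab_group_add \<Rightarrow> 'v) \<Rightarrow> 'v set \<Rightarrow> 'v \<Rightarrow> ('v, 'v, 'k) tens" where
  "grouplike_comult scale B h = (\<Sum>b \<in> {b \<in> B. module.representation scale B h b \<noteq> 0}.
      tscale (module.representation scale B h b) (tensor scale scale b b))"

locale grouplike_basis = vector_space scale
  for scale :: "'k::field \<Rightarrow> 'v::ab_group_add \<Rightarrow> 'v" (infixr \<open>*s\<close> 75) +
  fixes B :: "'v set"
  assumes independent_B: "independent B"
begin

lemma grouplike_comult_eq_sum:
  assumes "finite F" "{b. representation B h b \<noteq> 0} \<subseteq> F"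
  shows "grouplike_comult scale B h = (\<Sum>b\<in>F. tensor scale scale (representation B h b *s b) b)"
proof -
  have "{b \<in> B. representation B h b \<noteq> 0} = {b. representation B h b \<noteq> 0}"
    using representation_ne_zero by blast
  then have "grouplike_comult scale B h
      = (\<Sum>b | representation B h b \<noteq> 0. tensor scale scale (representation B h b *s b) b)"
    by (simp add: grouplike_comult_def tensor_scale_left)
  also have "\<dots> = (\<Sum>b\<in>F. tensor scale scale (representation B h b *s b) b)"
    using assms by (intro sum.mono_neutral_cong_left) (auto simp: tensor_zero_left)
  finally show ?thesis .
qed

lemma grouplike_comult_eq_sum_support:
  "grouplike_comult scale B h
    = (\<Sum>b | representation B h b \<noteq> 0. tensor scale scale (representation B h b *s b) b)"
  by (rule grouplike_comult_eq_sum) (simp_all add: finite_representation)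

lemma grouplike_comult_add:
  assumes "h1 \<in> span B" "h2 \<in> span B"
  shows "grouplike_comult scale B (h1 + h2) = grouplike_comult scale B h1 + grouplike_comult scale B h2"
proof -
  let ?F = "{b. representation B h1 b \<noteq> 0} \<union> {b. representation B h2 b \<noteq> 0}"
  have r: "representation B (h1 + h2) b = representation B h1 b + representation B h2 b" for b
    using assms by (simp add: representation_add[OF independent_B])
  have fin: "finite ?F" by (simp add: finite_representation)
  have "grouplike_comult scale B (h1 + h2)
      = (\<Sum>b\<in>?F. tensor scale scale (representation B (h1 + h2) b *s b) b)"
    by (rule grouplike_comult_eq_sum[OF fin]) (auto simp: r)
  also have "\<dots> = (\<Sum>b\<in>?F. tensor scale scale (representation B h1 b *s b) b)
                + (\<Sum>b\<in>?F. tensor scale scale (representation B h2 b *s b) b)"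
    by (simp add: r scale_left_distrib tensor_add_left sum.distrib)
  also have "\<dots> = grouplike_comult scale B h1 + grouplike_comult scale B h2"
    using grouplike_comult_eq_sum[OF fin] by auto
  finally show ?thesis .
qed

lemma grouplike_comult_scale:
  assumes "h \<in> span B"
  shows "grouplike_comult scale B (c *s h) = tscale c (grouplike_comult scale B h)"
proof -
  have r: "representation B (c *s h) b = c * representation B h b" for b
    using representation_scale[OF independent_B assms] by simp
  have "grouplike_comult scale B (c *s h)
      = (\<Sum>b | representation B h b \<noteq> 0. tensor scale scale (representation B (c *s h) b *s b) b)"
    by (rule grouplike_comult_eq_sum) (auto simp: r finite_representation)
  also have "\<dots> = tscale c (grouplike_comult scale B h)"
    by (simp add: grouplike_comult_eq_sum_support r tscale_sum tensor_scale_left[symmetric])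
  finally show ?thesis .
qed

lemma grouplike_comult_in_tensors:
  "grouplike_comult scale B h \<in> tensors scale scale (span B) (span B)"
  unfolding grouplike_comult_eq_sum_support
  by (rule tensors_sum) (auto simp: finite_representation span_base span_scale
      dest: representation_ne_zero)

lemma grouplike_comult_basis:
  assumes "b \<in> B"
  shows "grouplike_comult scale B b = tensor scale scale b b"
  using grouplike_comult_eq_sum[of "{b}" b] representation_basis[OF independent_B assms] by simp

lemma lin_on_grouplike_comult: "lin_on scale tscale (span B) (grouplike_comult scale B)"
  by (simp add: lin_on_def grouplike_comult_add grouplike_comult_scale span_scale)

text \<open>Both sides equal \<open>\<Sum>\<^sub>b r\<^sub>b \<cdot> b \<otimes> (b \<otimes> b)\<close> for \<open>h = \<Sum>\<^sub>b r\<^sub>b \<cdot> b\<close>.\<close>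

lemma grouplike_comult_coassoc:
  assumes h: "h \<in> span B"
  shows "tassoc scale scale scale (span B) (span B) (span B)
      (map_tensor scale scale tscale scale (span B) (span B) (grouplike_comult scale B) id
        (grouplike_comult scale B h))
    = map_tensor scale scale scale tscale (span B) (span B) id (grouplike_comult scale B)
        (grouplike_comult scale B h)"
proof -
  let ?D = "grouplike_comult scale B" and ?r = "representation B h"
  let ?F = "{b. ?r b \<noteq> 0}"
  have F: "finite ?F" by (simp add: finite_representation)
  have FB: "b \<in> B" if "b \<in> ?F" for b using that representation_ne_zero by blast
  have mem: "?r b *s b \<in> span B \<and> b \<in> span B" if "b \<in> ?F" for b
    using FB[OF that] by (simp add: span_base span_scale)
  note lifts = vector_space_axioms vector_space_axioms subspace_span subspace_span
  have Dh: "?D h = (\<Sum>b\<in>?F. tensor scale scale (?r b *s b) b)"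
    by (rule grouplike_comult_eq_sum_support)
  have "map_tensor scale scale tscale scale (span B) (span B) ?D id (?D h)
      = (\<Sum>b\<in>?F. tensor tscale scale (?D (?r b *s b)) (id b))"
    unfolding Dh
    by (rule map_tensor_sum[OF lifts lin_on_grouplike_comult lin_on_id F mem])
  also have "\<dots> = (\<Sum>b\<in>?F. tensor tscale scale (tensor scale scale b b) (?r b *s b))"
    using FB by (intro sum.cong refl) (simp add: grouplike_comult_scale span_base
        grouplike_comult_basis tensor_scale_left tensor_scale_right)
  finally have "tassoc scale scale scale (span B) (span B) (span B)
      (map_tensor scale scale tscale scale (span B) (span B) ?D id (?D h))
      = (\<Sum>b\<in>?F. tensor scale tscale b (tensor scale scale b (?r b *s b)))"
    using tassoc_tensor_tensor[OF vector_space_axioms vector_space_axioms vector_space_axioms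
        subspace_span subspace_span subspace_span F] FB
    by (simp add: span_base span_scale)
  also have "\<dots> = (\<Sum>b\<in>?F. tensor scale tscale (id (?r b *s b)) (?D b))"
    using FB by (intro sum.cong refl)
      (simp add: grouplike_comult_basis tensor_scale_left tensor_scale_right)
  also have "\<dots> = map_tensor scale scale scale tscale (span B) (span B) id ?D (?D h)"
    unfolding Dh
    by (rule map_tensor_sum[OF lifts lin_on_id lin_on_grouplike_comult F mem, symmetric])
  finally show ?thesis .
qed

lemma grouplike_counit_left:
  assumes e: "lin_on scale (*) (span B) e" "\<forall>b\<in>B. e b = 1" and h: "h \<in> span B"
  shows "tlift scale scale (span B) (span B) (\<lambda>a b. e a *s b) (grouplike_comult scale B h) = h"
proof -
  let ?r = "representation B h"
  have "tlift scale scale (span B) (span B) (\<lambda>a b. e a *s b) (grouplike_comult scale B h)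
      = (\<Sum>b | ?r b \<noteq> 0. e (?r b *s b) *s b)"
    unfolding grouplike_comult_eq_sum_support
    by (rule tlift_sum[OF vector_space_axioms vector_space_axioms subspace_span subspace_span
          balanced_scale_left[OF e(1) vector_space_axioms]])
      (auto simp: finite_representation span_base span_scale dest: representation_ne_zero)
  also have "\<dots> = (\<Sum>b | ?r b \<noteq> 0. ?r b *s b)"
    using e representation_ne_zero by (intro sum.cong refl) (auto simp: lin_on_def span_base)
  also have "\<dots> = h"
    using sum_nonzero_representation_eq[OF independent_B h] .
  finally show ?thesis .
qed

lemma grouplike_counit_right:
  assumes e: "lin_on scale (*) (span B) e" "\<forall>b\<in>B. e b = 1" and h: "h \<in> span B"
  shows "tlift scale scale (span B) (span B) (\<lambda>a b. e b *s a) (grouplike_comult scale B h) = h"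
proof -
  let ?r = "representation B h"
  have "tlift scale scale (span B) (span B) (\<lambda>a b. e b *s a) (grouplike_comult scale B h)
      = (\<Sum>b | ?r b \<noteq> 0. e b *s ?r b *s b)"
    unfolding grouplike_comult_eq_sum_support
    by (rule tlift_sum[OF vector_space_axioms vector_space_axioms subspace_span subspace_span
          balanced_scale_right[OF e(1) vector_space_axioms]])
      (auto simp: finite_representation span_base span_scale dest: representation_ne_zero)
  also have "\<dots> = (\<Sum>b | ?r b \<noteq> 0. ?r b *s b)"
    using e representation_ne_zero by (intro sum.cong refl) auto
  also have "\<dots> = h"
    using sum_nonzero_representation_eq[OF independent_B h] .
  finally show ?thesis .
qed

theorem coalgebra_grouplike:
  assumes "lin_on scale (*) (span B) e" "\<forall>b\<in>B. e b = 1"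
  shows "coalgebra scale (span B) (grouplike_comult scale B) e"
  unfolding coalgebra_def hom_on_def
  using assms vector_space_axioms subspace_span lin_on_grouplike_comult grouplike_comult_in_tensors
    grouplike_comult_coassoc grouplike_counit_left grouplike_counit_right
  by blast

end

theorem proposition4p9:
  fixes sL :: "'k::field \<Rightarrow> 'l::ab_group_add \<Rightarrow> 'l"
    and mu :: "('l, 'l, 'k) tens \<Rightarrow> 'l"
    and eta :: "'k \<Rightarrow> 'l"
    and Delta :: "'l \<Rightarrow> ('l, 'l, 'k) tens"
    and eps :: "'l \<Rightarrow> 'k"
  assumes "vector_space sL"
    and "algebra sL UNIV mu eta"
    and "coalgebra sL UNIV Delta eps"
    and "\<forall>c. eps (eta c) = c"
    and "\<forall>c. Delta (eta c) = map_tensor (*) (*) sL sL UNIV UNIV eta eta (tensor (*) (*) c 1)"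
  shows "(\<forall>f \<in> Hom1 sL (eta 1).
            (\<lambda>t. Delta (f (mu t))) \<in> HomT1 sL (eta 1) \<and>
            split_map sL (eta 1) eps (\<lambda>t. Delta (f (mu t))) = tensor (hscale sL) (hscale sL) f f)
       \<and> (\<forall>B. B \<subseteq> Hom1 sL (eta 1) \<and> \<not> module.dependent (hscale sL) B \<longrightarrow>
            coalgebra (hscale sL) (module.span (hscale sL) B) (DeltaB sL B) (\<lambda>f. eps (f (eta 1))))"
proof (intro conjI ballI allI impI)
  interpret vsK: vector_space "(*) :: 'k \<Rightarrow> 'k \<Rightarrow> 'k" by (rule vector_space_mult)
  have eta: "lin_on (*) sL UNIV eta" and eps: "lin_on sL (*) UNIV eps"
    using assms(2,3) by (auto simp: algebra_def coalgebra_def hom_on_def)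
  have "Delta (eta 1) = tensor sL sL (eta 1) (eta 1)"
    using assms(5) map_tensor_tensor[OF vector_space_mult vector_space_mult
        vsK.subspace_UNIV vsK.subspace_UNIV eta eta] by simp
  then show "(\<lambda>t. Delta (f (mu t))) \<in> HomT1 sL (eta 1)" if "f \<in> Hom1 sL (eta 1)" for f
    using comult_comp_mult_in_HomT1[OF assms(2,3) that] by blast
  show "split_map sL (eta 1) eps (\<lambda>t. Delta (f (mu t))) = tensor (hscale sL) (hscale sL) f f" for f
    by (rule split_map_comult_comp_mult[OF assms(2,3)])
  fix B assume B: "B \<subseteq> Hom1 sL (eta 1) \<and> \<not> module.dependent (hscale sL) B"
  interpret grouplike_basis "hscale sL" B
    using B vector_space_hscale[OF assms(1)] by (simp add: grouplike_basis_def grouplike_basis_axioms_def)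
  have "lin_on (hscale sL) (*) (span B) (\<lambda>f. eps (f (eta 1)))"
    using eps by (simp add: lin_on_def hscale_def)
  moreover have "\<forall>b\<in>B. eps (b (eta 1)) = 1"
    using B assms(4) by (auto simp: Hom1_def)
  ultimately show "coalgebra (hscale sL) (span B) (DeltaB sL B) (\<lambda>f. eps (f (eta 1)))"
    unfolding DeltaB_def grouplike_comult_def[symmetric] by (rule coalgebra_grouplike)
qed

end
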